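(* Let $G$ be a strongly observable directed graph on $K$ vertices with independence number $\alpha$. The set $D$ returned by the procedure OODS (described in the context) on input $G$ satisfies $|D|\le\lceil\alpha(1+2\ln(K/\alpha))\rceil$. Moreover, if $G$ is acyclic or undirected, then $|D|\le\alpha$.
   Context: A directed graph $G=([K],E)$ (self-loops allowed) is strongly observable if every vertex either has a self-loop or has incoming edges from all other vertices. The independence number $\alpha$ is the maximum size of a set of vertices no two distinct members of which are joined by an edge (in either direction). An undirected graph is treated as the directed graph with both orientations of each edge. A "no-root vertex" is a vertex with no incoming edges other than its self-loop. The out-neighbors of a vertex $u$ are the vertices $w$ with $(u,w)\in E$; the out-degree is their number. Procedure OODS: start with $D=\emptyset$. While $G$ is nonempty: if $G$ (currently) is acyclic, add all no-root vertices to $D$ and remove them and their out-neighbors from $G$; otherwise, select a vertex of largest out-degree in $G$, add it to $D$, and remove it and its out-neighbors from $G$. Return $D$. *)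

theory Defs
  imports Complex_Main
begin

text \<open>The "current graph" during OODS is the subgraph of \<open>E\<close> induced by the set \<open>V\<close> of remaining vertices.\<close>

definition digraph_on :: "nat \<Rightarrow> (nat \<times> nat) set \<Rightarrow> bool" where
  "digraph_on K E \<longleftrightarrow> E \<subseteq> {0..<K} \<times> {0..<K}"

definition strongly_observable :: "nat \<Rightarrow> (nat \<times> nat) set \<Rightarrow> bool" where
  "strongly_observable K E \<longleftrightarrow>
     (\<forall>v\<in>{0..<K}. (v, v) \<in> E \<or> (\<forall>u\<in>{0..<K}. u \<noteq> v \<longrightarrow> (u, v) \<in> E))"

definition independent_set :: "(nat \<times> nat) set \<Rightarrow> nat set \<Rightarrow> bool" where
  "independent_set E S \<longleftrightarrow> (\<forall>u\<in>S. \<forall>v\<in>S. u \<noteq> v \<longrightarrow> (u, v) \<notin> E)"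

definition independence_number :: "nat \<Rightarrow> (nat \<times> nat) set \<Rightarrow> nat" where
  "independence_number K E = Max {card S | S. S \<subseteq> {0..<K} \<and> independent_set E S}"

definition acyclic_on :: "(nat \<times> nat) set \<Rightarrow> nat set \<Rightarrow> bool" where
  "acyclic_on E V \<longleftrightarrow> acyclic {(u, w). u \<in> V \<and> w \<in> V \<and> u \<noteq> w \<and> (u, w) \<in> E}"

definition no_roots :: "(nat \<times> nat) set \<Rightarrow> nat set \<Rightarrow> nat set" where
  "no_roots E V = {v \<in> V. \<forall>u\<in>V. u \<noteq> v \<longrightarrow> (u, v) \<notin> E}"

definition out_nbrs :: "(nat \<times> nat) set \<Rightarrow> nat set \<Rightarrow> nat \<Rightarrow> nat set" where
  "out_nbrs E V u = {w \<in> V. (u, w) \<in> E}"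

definition out_deg :: "(nat \<times> nat) set \<Rightarrow> nat set \<Rightarrow> nat \<Rightarrow> nat" where
  "out_deg E V u = card (out_nbrs E V u)"

text \<open>\<open>oods_run E V D\<close>: running OODS on the subgraph induced by \<open>V\<close> can return \<open>D\<close>
  (any tie-breaking in the choice of a vertex of largest out-degree).\<close>
inductive oods_run :: "(nat \<times> nat) set \<Rightarrow> nat set \<Rightarrow> nat set \<Rightarrow> bool" for E where
  empty: "oods_run E {} {}"
| acyc: "\<lbrakk> V \<noteq> {}; acyclic_on E V;
           oods_run E (V - (no_roots E V \<union> (\<Union>v\<in>no_roots E V. out_nbrs E V v))) D \<rbrakk>
         \<Longrightarrow> oods_run E V (no_roots E V \<union> D)"
| greedy: "\<lbrakk> V \<noteq> {}; \<not> acyclic_on E V; u \<in> V; \<forall>w\<in>V. out_deg E V w \<le> out_deg E V u;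
             oods_run E (V - ({u} \<union> out_nbrs E V u)) D \<rbrakk>
         \<Longrightarrow> oods_run E V (insert u D)"

end

theory Submission
  imports Defs
begin

text \<open>
  Let every independent set of the current graph on \<open>n\<close> vertices have at most \<open>a\<close> elements.
  If at least half of the vertices carry self-loops, Turan's bound
  \<open>n\<^sup>2 \<le> a \<cdot> \<Sum>(deg + 1)\<close> for the underlying undirected graph bounds the out-degree sum;
  otherwise more than \<open>n / 2\<close> vertices are loopless and, by strong observability, each has
  in-degree \<open>n - 1\<close>. Either way \<open>n\<^sup>2 \<le> 2 a \<cdot> \<Sum> out-degrees\<close>, so a greedy step of OODS removes
  at least \<open>n / (2 a)\<close> vertices and thus lowers \<open>2 a ln n\<close> by at least \<open>1\<close>. Hence the potential
  \<open>a (1 + 2 ln (n / a)) + 1\<close> bounds the number of vertices still to be selected while \<open>n > a\<close>.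
  The vertices selected once the graph is acyclic, or all of them if the graph is undirected,
  form an independent set, so there are at most \<open>a\<close> of them.
\<close>

lemma sum_card_filter_swap:
  assumes "finite V"
  shows "(\<Sum>w\<in>V. card {x\<in>V. R w x}) = (\<Sum>x\<in>V. card {w\<in>V. R w x})"
  using sum.swap_restrict[OF assms assms, of "\<lambda>_ _. 1::nat" R] by (simp only: card_eq_sum)

lemma turan_step_inequality:
  fixes x m b s t :: nat
  assumes "x\<^sup>2 \<le> s" and "m\<^sup>2 \<le> b * t" and "m \<le> t"
  shows "(x + m)\<^sup>2 \<le> (b + 1) * (s + t)"
proof -
  have cross: "2 * x * m \<le> b * x\<^sup>2 + t"
  proof (cases "b = 0")
    case True
    then show ?thesis using assms(2) by simp
  next
    case False
    have "b * (2 * x * m) = 2 * (b * x) * m" by (simp add: algebra_simps)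
    also have "\<dots> \<le> (b * x)\<^sup>2 + m\<^sup>2"
      using sum_squares_bound[of "real (b * x)" "real m"] of_nat_le_iff[where 'a=real] by fastforce
    also have "\<dots> \<le> b * (b * x\<^sup>2 + t)"
      using assms(2) by (simp add: power2_eq_square algebra_simps)
    finally show ?thesis using False by simp
  qed
  have "(x + m)\<^sup>2 = x\<^sup>2 + 2 * x * m + m\<^sup>2" by (simp add: power2_sum)
  also have "\<dots> \<le> s + (b * s + t) + b * t"
    using cross assms(1,2) mult_le_mono2[OF assms(1), of b] by linarith
  finally show ?thesis by (simp add: algebra_simps)
qed

lemma independence_bound_Diff_closed_nbhd:
  fixes A :: "'a \<Rightarrow> 'a \<Rightarrow> bool"
  assumes sym: "\<And>x y. A x y \<Longrightarrow> A y x" and "v \<in> V" and "finite V"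
    and indep: "\<And>S. S \<subseteq> V \<Longrightarrow> pairwise (\<lambda>x y. \<not> A x y) S \<Longrightarrow> card S \<le> Suc b"
    and S: "S \<subseteq> V - insert v {w\<in>V. A v w}" "pairwise (\<lambda>x y. \<not> A x y) S"
  shows "card S \<le> b"
proof -
  have "pairwise (\<lambda>x y. \<not> A x y) (insert v S)"
    using S sym by (auto simp: pairwise_insert)
  moreover have "insert v S \<subseteq> V"
    using S(1) \<open>v \<in> V\<close> by blast
  ultimately have "card (insert v S) \<le> Suc b"
    by (rule indep[rotated])
  moreover have "v \<notin> S" and "finite S"
    using S(1) \<open>finite V\<close> finite_subset by auto
  ultimately show ?thesis by simp
qed

lemma turan_independence_bound:
  fixes A :: "'a \<Rightarrow> 'a \<Rightarrow> bool"
  assumes sym: "\<And>x y. A x y \<Longrightarrow> A y x" and irrefl: "\<And>x. \<not> A x x"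
    and "finite V" and "\<And>S. S \<subseteq> V \<Longrightarrow> pairwise (\<lambda>x y. \<not> A x y) S \<Longrightarrow> card S \<le> a"
  shows "(card V)\<^sup>2 \<le> a * (\<Sum>v\<in>V. card {w\<in>V. A v w} + 1)"
  using assms(3,4)
proof (induction a arbitrary: V)
  case 0
  have "v \<notin> V" for v
    using "0.prems"(2)[of "{v}"] by auto
  then show ?case by force
next
  case (Suc b)
  define deg where "deg U v = card {w\<in>U. A v w}" for U v
  show ?case
  proof (cases "V = {}")
    case False
    obtain v where v: "v \<in> V" "\<And>w. w \<in> V \<Longrightarrow> deg V v \<le> deg V w"
      using arg_min_if_finite[OF \<open>finite V\<close> False, of "deg V"] by (metis not_le)
    define N where "N = insert v {w\<in>V. A v w}"
    define R where "R = V - N"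
    have "N \<subseteq> V" and "finite N" and "finite R"
      using v(1) Suc.prems(1) by (auto simp: N_def R_def)
    have "(card R)\<^sup>2 \<le> b * (\<Sum>w\<in>R. deg R w + 1)"
      using Suc.IH[OF \<open>finite R\<close>] independence_bound_Diff_closed_nbhd[OF sym v(1) Suc.prems]
      by (simp add: deg_def R_def N_def)
    also have "\<dots> \<le> b * (\<Sum>w\<in>R. deg V w + 1)"
      unfolding deg_def R_def using Suc.prems(1)
      by (intro mult_le_mono2 sum_mono add_right_mono card_mono) auto
    finally have "(card R)\<^sup>2 \<le> b * (\<Sum>w\<in>R. deg V w + 1)" .
    moreover have "card R \<le> (\<Sum>w\<in>R. deg V w + 1)"
      unfolding card_eq_sum by (rule sum_mono) simp
    moreover have "card N = deg V v + 1"
      using irrefl Suc.prems(1) by (simp add: N_def deg_def)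
    then have "(card N)\<^sup>2 \<le> (\<Sum>w\<in>N. deg V w + 1)"
      using sum_bounded_below[of N "deg V v + 1" "\<lambda>w. deg V w + 1"] v(2) \<open>N \<subseteq> V\<close>
      by (auto simp: power2_eq_square)
    ultimately have "(card N + card R)\<^sup>2 \<le> Suc b * ((\<Sum>w\<in>N. deg V w + 1) + (\<Sum>w\<in>R. deg V w + 1))"
      using turan_step_inequality by simp
    moreover have "card V = card N + card R"
      using \<open>N \<subseteq> V\<close> \<open>finite N\<close> Suc.prems(1) by (simp add: R_def card_Diff_subset card_mono)
    moreover have "(\<Sum>w\<in>V. deg V w + 1) = (\<Sum>w\<in>N. deg V w + 1) + (\<Sum>w\<in>R. deg V w + 1)"
      using \<open>N \<subseteq> V\<close> Suc.prems(1) by (simp add: R_def sum.subset_diff)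
    ultimately show ?thesis
      by (simp add: deg_def)
  qed simp
qed

definition strongly_observable_on :: "(nat \<times> nat) set \<Rightarrow> nat set \<Rightarrow> bool" where
  "strongly_observable_on E V \<longleftrightarrow> (\<forall>v\<in>V. (v, v) \<in> E \<or> (\<forall>u\<in>V. u \<noteq> v \<longrightarrow> (u, v) \<in> E))"

lemma strongly_observable_eq_on_vertices:
  "strongly_observable K E \<longleftrightarrow> strongly_observable_on E {0..<K}"
  by (simp add: strongly_observable_def strongly_observable_on_def)

lemma strongly_observable_on_subset:
  "strongly_observable_on E V \<Longrightarrow> W \<subseteq> V \<Longrightarrow> strongly_observable_on E W"
  unfolding strongly_observable_on_def by blast

lemma independence_bound_ge_1:
  assumes "\<And>S. S \<subseteq> V \<Longrightarrow> independent_set E S \<Longrightarrow> card S \<le> a" and "V \<noteq> {}"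
  shows "1 \<le> a"
proof -
  obtain v where "v \<in> V"
    using \<open>V \<noteq> {}\<close> by blast
  then show ?thesis
    using assms(1)[of "{v}"] by (simp add: independent_set_def)
qed

lemma card_squared_le_sum_loopless_in_deg:
  assumes "finite V" and indep: "\<And>S. S \<subseteq> V \<Longrightarrow> independent_set E S \<Longrightarrow> card S \<le> a"
  shows "(card V)\<^sup>2 \<le> a * (2 * (\<Sum>x\<in>V. card {w\<in>V. w \<noteq> x \<and> (w, x) \<in> E}) + card V)"
proof -
  define A where "A w x \<longleftrightarrow> w \<noteq> x \<and> ((w, x) \<in> E \<or> (x, w) \<in> E)" for w x
  have "independent_set E S" if "pairwise (\<lambda>x y. \<not> A x y) S" for S
    using that by (auto simp: A_def independent_set_def pairwise_def)
  then have "(card V)\<^sup>2 \<le> a * (\<Sum>v\<in>V. card {w\<in>V. A v w} + 1)"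
    using turan_independence_bound[of A V a] \<open>finite V\<close> indep by (auto simp: A_def)
  also have "(\<Sum>v\<in>V. card {w\<in>V. A v w} + 1)
      \<le> (\<Sum>v\<in>V. card {x\<in>V. v \<noteq> x \<and> (v, x) \<in> E} + card {w\<in>V. w \<noteq> v \<and> (w, v) \<in> E} + 1)"
  proof (rule sum_mono)
    fix v
    have "{w\<in>V. A v w} = {x\<in>V. v \<noteq> x \<and> (v, x) \<in> E} \<union> {w\<in>V. w \<noteq> v \<and> (w, v) \<in> E}"
      by (auto simp: A_def)
    then show "card {w\<in>V. A v w} + 1
        \<le> card {x\<in>V. v \<noteq> x \<and> (v, x) \<in> E} + card {w\<in>V. w \<noteq> v \<and> (w, v) \<in> E} + 1"
      by (simp add: card_Un_le)
  qed
  also have "\<dots> = 2 * (\<Sum>x\<in>V. card {w\<in>V. w \<noteq> x \<and> (w, x) \<in> E}) + card V"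
    using sum_card_filter_swap[OF \<open>finite V\<close>, of "\<lambda>v x. v \<noteq> x \<and> (v, x) \<in> E"]
    unfolding sum.distrib by simp
  finally show ?thesis
    by (simp add: mult_le_mono2)
qed

lemma sum_out_deg_eq_loopless_in_deg_plus_loops:
  assumes "finite V"
  shows "(\<Sum>w\<in>V. out_deg E V w)
    = (\<Sum>x\<in>V. card {w\<in>V. w \<noteq> x \<and> (w, x) \<in> E}) + card {v\<in>V. (v, v) \<in> E}"
proof -
  have "card {w\<in>V. (w, x) \<in> E} = card {w\<in>V. w \<noteq> x \<and> (w, x) \<in> E} + of_bool ((x, x) \<in> E)"
    if "x \<in> V" for x
  proof -
    have "{w\<in>V. (w, x) \<in> E} = {w\<in>V. w \<noteq> x \<and> (w, x) \<in> E} \<union> (if (x, x) \<in> E then {x} else {})"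
      using that by auto
    then show ?thesis
      using \<open>finite V\<close> by (simp add: card_Un_disjoint)
  qed
  moreover have "(\<Sum>w\<in>V. out_deg E V w) = (\<Sum>x\<in>V. card {w\<in>V. (w, x) \<in> E})"
    using sum_card_filter_swap[OF \<open>finite V\<close>] by (simp add: out_deg_def out_nbrs_def)
  ultimately show ?thesis
    using \<open>finite V\<close> by (simp add: sum.distrib Int_def)
qed

lemma card_plus_loopless_le_sum_out_deg:
  assumes "finite V" and "2 \<le> card V" and obs: "strongly_observable_on E V"
  shows "card V + card {v\<in>V. (v, v) \<notin> E} * (card V - 2) \<le> (\<Sum>w\<in>V. out_deg E V w)"
proof -
  have "1 + (card V - 2) * of_bool ((x, x) \<notin> E) \<le> card {w\<in>V. (w, x) \<in> E}" if "x \<in> V" for x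
  proof (cases "(x, x) \<in> E")
    case True
    then show ?thesis
      using \<open>finite V\<close> that by (auto simp: card_gt_0_iff Suc_le_eq)
  next
    case False
    then have "{w\<in>V. (w, x) \<in> E} = V - {x}"
      using obs that by (auto simp: strongly_observable_on_def)
    then show ?thesis
      using False that \<open>2 \<le> card V\<close> by simp
  qed
  then have "(\<Sum>x\<in>V. 1 + (card V - 2) * of_bool ((x, x) \<notin> E)) \<le> (\<Sum>x\<in>V. card {w\<in>V. (w, x) \<in> E})"
    by (rule sum_mono)
  also have "\<dots> = (\<Sum>w\<in>V. out_deg E V w)"
    using sum_card_filter_swap[OF \<open>finite V\<close>] by (simp add: out_deg_def out_nbrs_def)
  finally show ?thesis
    using \<open>finite V\<close> unfolding sum.distrib sum_distrib_left[symmetric] by (simp add: Int_def mult.commute)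
qed

lemma card_squared_le_sum_out_deg:
  assumes "finite V" and "2 \<le> card V" and "strongly_observable_on E V"
    and indep: "\<And>S. S \<subseteq> V \<Longrightarrow> independent_set E S \<Longrightarrow> card S \<le> a"
  shows "(card V)\<^sup>2 \<le> 2 * a * (\<Sum>w\<in>V. out_deg E V w)"
proof -
  define n where "n = card V"
  define loops where "loops = card {v\<in>V. (v, v) \<in> E}"
  define loopless where "loopless = card {v\<in>V. (v, v) \<notin> E}"
  have "n = card ({v\<in>V. (v, v) \<in> E} \<union> {v\<in>V. (v, v) \<notin> E})"
    unfolding n_def by (rule arg_cong[where f = card]) blast
  also have "\<dots> = loops + loopless"
    unfolding loops_def loopless_def using \<open>finite V\<close> by (intro card_Un_disjoint) auto
  finally have "n = loops + loopless" .
  show ?thesis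
  proof (cases "loopless \<le> loops")
    case True
    have "(card V)\<^sup>2 \<le> a * (2 * (\<Sum>x\<in>V. card {w\<in>V. w \<noteq> x \<and> (w, x) \<in> E}) + n)"
      using card_squared_le_sum_loopless_in_deg[OF \<open>finite V\<close> indep] by (simp add: n_def)
    also have "\<dots> \<le> 2 * a * (\<Sum>w\<in>V. out_deg E V w)"
      using True \<open>n = loops + loopless\<close> sum_out_deg_eq_loopless_in_deg_plus_loops[OF \<open>finite V\<close>]
      by (simp add: loops_def)
    finally show ?thesis .
  next
    case False
    have "n * (n - 2) \<le> 2 * loopless * (n - 2)"
      using False \<open>n = loops + loopless\<close> by simp
    moreover have "n\<^sup>2 = n * (n - 2) + 2 * n"
      using \<open>2 \<le> card V\<close> by (simp add: n_def power2_eq_square diff_mult_distrib2)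
    ultimately have "n\<^sup>2 \<le> 2 * (n + loopless * (n - 2))"
      by simp
    also have "\<dots> \<le> 2 * (\<Sum>w\<in>V. out_deg E V w)"
      using card_plus_loopless_le_sum_out_deg[OF assms(1-3)] by (simp add: n_def loopless_def)
    also have "\<dots> \<le> 2 * a * (\<Sum>w\<in>V. out_deg E V w)"
      using independence_bound_ge_1[OF indep] \<open>2 \<le> card V\<close> by fastforce
    finally show ?thesis
      by (simp add: n_def)
  qed
qed

lemma acyclic_on_subset: "acyclic_on E V \<Longrightarrow> W \<subseteq> V \<Longrightarrow> acyclic_on E W"
  unfolding acyclic_on_def by (erule acyclic_subset) auto

lemma acyclic_on_if_card_le_1:
  assumes "finite V" and "card V \<le> 1"
  shows "acyclic_on E V"
proof -
  have no_edges: "{(u, w). u \<in> V \<and> w \<in> V \<and> u \<noteq> w \<and> (u, w) \<in> E} = {}"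
    using assms card_le_Suc0_iff_eq by auto
  show ?thesis
    unfolding acyclic_on_def no_edges by (simp add: acyclic_def)
qed

lemma card_le_closed_out_nbhd_of_max_out_deg:
  assumes "finite V" and "\<not> acyclic_on E V" and "strongly_observable_on E V"
    and "\<And>S. S \<subseteq> V \<Longrightarrow> independent_set E S \<Longrightarrow> card S \<le> a"
    and max: "\<forall>w\<in>V. out_deg E V w \<le> out_deg E V u"
  shows "card V \<le> 2 * a * card ({u} \<union> out_nbrs E V u)"
proof -
  have "2 \<le> card V"
    using acyclic_on_if_card_le_1[OF \<open>finite V\<close>] \<open>\<not> acyclic_on E V\<close> by fastforce
  have "card V * card V \<le> 2 * a * (\<Sum>w\<in>V. out_deg E V w)"
    using card_squared_le_sum_out_deg[OF \<open>finite V\<close> \<open>2 \<le> card V\<close> assms(3,4)]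
    by (simp add: power2_eq_square)
  also have "\<dots> \<le> 2 * a * (card V * out_deg E V u)"
    using sum_bounded_above[of V "out_deg E V" "out_deg E V u"] max by simp
  finally have "card V \<le> 2 * a * out_deg E V u"
    using \<open>2 \<le> card V\<close> by (simp add: algebra_simps)
  also have "out_deg E V u \<le> card ({u} \<union> out_nbrs E V u)"
    unfolding out_deg_def using \<open>finite V\<close>
    by (intro card_mono) (simp_all add: out_nbrs_def subset_insertI)
  finally show ?thesis
    by simp
qed

lemma finite_card_independent_sets: "finite {card S | S. S \<subseteq> {0..<K} \<and> independent_set E S}"
  by (rule finite_subset[of _ "card ` Pow {0..<K}"]) auto

lemma card_le_independence_number:
  "S \<subseteq> {0..<K} \<Longrightarrow> independent_set E S \<Longrightarrow> card S \<le> independence_number K E"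
  unfolding independence_number_def by (rule Max_ge[OF finite_card_independent_sets]) blast

lemma independence_number_le: "independence_number K E \<le> K"
  unfolding independence_number_def
proof (rule Max.boundedI[OF finite_card_independent_sets])
  show "{card S | S. S \<subseteq> {0..<K} \<and> independent_set E S} \<noteq> {}"
    by (auto simp: independent_set_def)
qed (auto dest: card_mono[rotated])

lemma oods_run_subset: "oods_run E V D \<Longrightarrow> D \<subseteq> V"
  by (induction rule: oods_run.induct) (auto simp: no_roots_def)

lemma independent_set_no_roots_Un:
  assumes "independent_set E D"
    and "D \<subseteq> V - (no_roots E V \<union> (\<Union>v\<in>no_roots E V. out_nbrs E V v))"
  shows "independent_set E (no_roots E V \<union> D)"
  unfolding independent_set_def
proof (intro ballI impI)
  fix x y
  assume x: "x \<in> no_roots E V \<union> D" and y: "y \<in> no_roots E V \<union> D" and "x \<noteq> y"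
  have "x \<in> V"
    using x assms(2) by (auto simp: no_roots_def)
  consider "y \<in> no_roots E V" | "x \<in> no_roots E V" "y \<in> D" | "x \<in> D" "y \<in> D"
    using x y by blast
  then show "(x, y) \<notin> E"
  proof cases
    case 1
    then show ?thesis using \<open>x \<in> V\<close> \<open>x \<noteq> y\<close> by (simp add: no_roots_def)
  next
    case 2
    then show ?thesis using assms(2) by (auto simp: out_nbrs_def)
  next
    case 3
    then show ?thesis using assms(1) \<open>x \<noteq> y\<close> by (simp add: independent_set_def)
  qed
qed

lemma independent_set_insert_if_sym:
  assumes "sym E" and "independent_set E D" and "D \<subseteq> V - ({u} \<union> out_nbrs E V u)"
  shows "independent_set E (insert u D)"
  using assms unfolding independent_set_def out_nbrs_def by (auto dest: symD)

lemma oods_run_independent: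
  "oods_run E V D \<Longrightarrow> acyclic_on E V \<or> sym E \<Longrightarrow> independent_set E D"
proof (induction rule: oods_run.induct)
  case empty
  then show ?case by (simp add: independent_set_def)
next
  case (acyc V D)
  have "independent_set E D"
    using acyc.IH acyclic_on_subset[OF acyc.hyps(2) Diff_subset] by blast
  then show ?case
    using independent_set_no_roots_Un oods_run_subset[OF acyc.hyps(3)] by blast
next
  case (greedy V u D)
  then have "sym E"
    by blast
  then show ?case
    using greedy.IH independent_set_insert_if_sym oods_run_subset[OF greedy.hyps(5)] by blast
qed

lemma oods_run_card_le_independence_bound:
  assumes "oods_run E V D" and "acyclic_on E V \<or> sym E"
    and "\<And>S. S \<subseteq> V \<Longrightarrow> independent_set E S \<Longrightarrow> card S \<le> a"
  shows "card D \<le> a"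
  using assms(3)[OF oods_run_subset[OF assms(1)] oods_run_independent[OF assms(1,2)]] .

lemma log_bound_step:
  fixes a n r :: nat
  assumes "0 < a" and "a < n - r" and "n \<le> 2 * a * r"
  shows "a * (1 + 2 * ln (real (n - r) / a)) + 1 \<le> a * (1 + 2 * ln (real n / a))"
proof -
  have "r < n" and "real n \<le> 2 * real a * real r"
    using assms(2) assms(3)[folded of_nat_le_iff[where 'a = real]] by simp_all
  then have "1 \<le> 2 * a * (r / n)"
    using assms(2) by (simp add: field_simps)
  also have "\<dots> \<le> 2 * a * (ln n - ln (real (n - r)))"
    using ln_diff_le[of "real (n - r)" n] \<open>r < n\<close>
    by (intro mult_left_mono) (auto simp: of_nat_diff diff_divide_distrib)
  finally show ?thesis
    using assms(1) \<open>r < n\<close> by (simp add: ln_div of_nat_diff algebra_simps)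
qed

lemma less_log_bound:
  fixes a n :: nat
  assumes "0 < a" and "a < n"
  shows "a < a * (1 + 2 * ln (real n / a))"
proof -
  have "0 < ln (real n / a)"
    using assms by simp
  then show ?thesis
    using assms(1) by (simp add: algebra_simps)
qed

lemma log_bound_Suc:
  fixes a n r d :: nat
  assumes "0 < a" and "a < n" and "n \<le> 2 * a * r" and "d \<le> n - r"
    and "a < n - r \<Longrightarrow> d < a * (1 + 2 * ln (real (n - r) / a)) + 1"
  shows "d + 1 < a * (1 + 2 * ln (real n / a)) + 1"
proof (cases "a < n - r")
  case True
  then show ?thesis
    using log_bound_step[OF assms(1) True assms(3)] assms(5) by simp
next
  case False
  then show ?thesis
    using less_log_bound[OF assms(1,2)] assms(4) by simp
qed

lemma oods_run_card_less:
  assumes "oods_run E V D" and "finite V" and "strongly_observable_on E V"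
    and "\<And>S. S \<subseteq> V \<Longrightarrow> independent_set E S \<Longrightarrow> card S \<le> a" and "a < card V"
  shows "card D < a * (1 + 2 * ln (real (card V) / a)) + 1"
  using assms
proof (induction rule: oods_run.induct)
  case empty
  then show ?case by simp
next
  case (acyc V D)
  have "card (no_roots E V \<union> D) \<le> a"
    using oods_run_card_le_independence_bound[OF oods_run.acyc[OF acyc.hyps]]
      acyc.hyps(2) acyc.prems(3) by blast
  moreover have "a < a * (1 + 2 * ln (real (card V) / a))"
    using less_log_bound independence_bound_ge_1[of V E a] acyc.prems(3,4) acyc.hyps(1) by simp
  ultimately show ?case
    by linarith
next
  case (greedy V u D)
  define R where "R = {u} \<union> out_nbrs E V u"
  have "R \<subseteq> V" and "D \<subseteq> V - R"
    using greedy.hyps(3) oods_run_subset[OF greedy.hyps(5)] by (auto simp: R_def out_nbrs_def)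
  then have "u \<notin> D"
    by (auto simp: R_def)
  from \<open>R \<subseteq> V\<close> have "card (V - R) = card V - card R"
    using greedy.prems(1) by (simp add: card_Diff_subset finite_subset)
  moreover have "card D \<le> card (V - R)"
    using card_mono[OF finite_Diff[OF greedy.prems(1)] \<open>D \<subseteq> V - R\<close>] .
  moreover have "card (insert u D) = card D + 1"
    using \<open>u \<notin> D\<close> finite_subset[OF \<open>D \<subseteq> V - R\<close> finite_Diff[OF greedy.prems(1)]] by simp
  moreover have "card V \<le> 2 * a * card R"
    using card_le_closed_out_nbhd_of_max_out_deg[OF greedy.prems(1) greedy.hyps(2) greedy.prems(2,3)
        greedy.hyps(4)] by (simp add: R_def)
  moreover have "card D < a * (1 + 2 * ln (real (card (V - R)) / a)) + 1" if "a < card (V - R)"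
  proof (rule greedy.IH[folded R_def])
    show "finite (V - R)" and "strongly_observable_on E (V - R)" and "a < card (V - R)"
      using greedy.prems(1) strongly_observable_on_subset[OF greedy.prems(2)] that by auto
    show "card S \<le> a" if "S \<subseteq> V - R" and "independent_set E S" for S
      using greedy.prems(3) that by blast
  qed
  moreover have "0 < a"
    using independence_bound_ge_1[of V E a] greedy.prems(3) greedy.hyps(1) by simp
  ultimately show ?case
    using log_bound_Suc[of a "card V" "card R" "card D"] greedy.prems(4) by simp
qed

theorem lemma24:
  fixes K :: nat and E :: "(nat \<times> nat) set" and D :: "nat set"
  assumes "digraph_on K E"
    and "strongly_observable K E"
    and "oods_run E {0..<K} D"
  shows "int (card D) \<le> \<lceil>real (independence_number K E) *
            (1 + 2 * ln (real K / real (independence_number K E)))\<rceil>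
         \<and> ((acyclic_on E {0..<K} \<or> sym E) \<longrightarrow> card D \<le> independence_number K E)"
proof
  let ?\<alpha> = "independence_number K E"
  have "D \<subseteq> {0..<K}"
    using oods_run_subset[OF assms(3)] .
  show "int (card D) \<le> \<lceil>real ?\<alpha> * (1 + 2 * ln (real K / real ?\<alpha>))\<rceil>"
  proof (cases "?\<alpha> < K")
    case True
    then have "card D < ?\<alpha> * (1 + 2 * ln (real K / ?\<alpha>)) + 1"
      using oods_run_card_less[OF assms(3) finite_atLeastLessThan _ card_le_independence_number]
        assms(2) by (simp add: strongly_observable_eq_on_vertices)
    then show ?thesis
      by (simp add: le_ceiling_iff)
  next
    case False
    then have "?\<alpha> = K"
      using independence_number_le[of K E] by simp
    moreover have "card D \<le> K"
      using card_mono[OF _ \<open>D \<subseteq> {0..<K}\<close>] by simp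
    ultimately show ?thesis
      by (cases "K = 0") simp_all
  qed
  show "(acyclic_on E {0..<K} \<or> sym E) \<longrightarrow> card D \<le> ?\<alpha>"
    using oods_run_card_le_independence_bound[OF assms(3) _ card_le_independence_number] by blast
qed

end
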